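(* Let $x>0$, $N\in\mathbb{N}$, $q\in\mathbb{N}$, let $\chi$ be any Dirichlet character modulo $q$, and let $h\in\mathbb{Z}$. Then for every real $c_0>\max\{1,(N-2h+1)/N\}$, $$\sum_{r=1}^{q}\sum_{n=1}^{\infty}\frac{\chi(r)\,n^{N-2h}\exp\left(-\frac{r}{q}n^Nx\right)}{1-\exp(-n^Nx)}=\frac{1}{2\pi i}\int_{c_0-i\infty}^{c_0+i\infty}\Gamma(s)L(s,\chi)\zeta(Ns-(N-2h))\left(\frac{q}{x}\right)^{s}\,\mathrm{d}s.$$
   Context: $\Gamma$ is the Gamma function, $\zeta$ the Riemann zeta function and $L(s,\chi)=\sum_{n\ge1}\chi(n)n^{-s}$ the Dirichlet $L$-function; the integral is over the vertical line $\Re(s)=c_0$. *)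

theory Defs
  imports "HOL-Analysis.Analysis" "HOL-Number_Theory.Number_Theory"
begin

definition dirichlet_character :: "nat \<Rightarrow> (nat \<Rightarrow> complex) \<Rightarrow> bool" where
  "dirichlet_character q chi \<longleftrightarrow> q \<ge> 1 \<and> chi 1 = 1 \<and>
     (\<forall>m n. chi (m * n) = chi m * chi n) \<and>
     (\<forall>n. chi (n + q) = chi n) \<and>
     (\<forall>n. chi n \<noteq> 0 \<longleftrightarrow> coprime n q)"

text \<open>Dirichlet series definitions, valid (and used only) in the half-plane Re s > 1.\<close>
definition dirichlet_L :: "complex \<Rightarrow> (nat \<Rightarrow> complex) \<Rightarrow> complex" where
  "dirichlet_L s chi = (\<Sum>n. chi (Suc n) / (of_nat (Suc n)) powr s)"

definition riemann_zeta :: "complex \<Rightarrow> complex" where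
  "riemann_zeta s = (\<Sum>n. 1 / (of_nat (Suc n)) powr s)"

end

theory Submission
  imports Defs "HOL-Probability.Levy"
begin

text \<open>For \<open>c, y > 0\<close> the Cahen-Mellin integral
  \<open>(1 / 2\<pi>) \<integral> \<Gamma>(c + i t) y powr -(c + i t) dt\<close> equals \<open>exp (-y)\<close>. This is Fourier
  inversion: \<open>t \<mapsto> \<Gamma>(c + i t) / \<Gamma>(c)\<close> is the characteristic function of \<open>ln U\<close> for a
  Gamma(c)-distributed \<open>U\<close>, and it is integrable since the functional equation gives
  \<open>|\<Gamma>(c + i t)| \<le> \<Gamma>(c + 2) / (c\<^sup>2 + t\<^sup>2)\<close>.
  On the line \<open>Re s = c\<^sub>0\<close> the Dirichlet series of \<open>L(s, \<chi>)\<close>, split into residue classes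
  \<open>r mod q\<close>, and of \<open>\<zeta>(N s - (N - 2 h))\<close> converge absolutely, so the integral can be taken term
  by term: the pair \<open>(m, n)\<close> with \<open>m \<equiv> r mod q\<close> contributes
  \<open>\<chi>(r) n powr (N - 2 h) exp (- m n\<^sup>N x / q)\<close>, and the sum over \<open>m\<close> is geometric.\<close>

section \<open>The Gamma function on vertical lines\<close>

lemma norm_Gamma_le_Gamma_Re:
  assumes "Re z > 0"
  shows "norm (Gamma z) \<le> Gamma (Re z)"
proof -
  have f: "((\<lambda>t. of_real t powr (z - 1) / of_real (exp t)) has_integral Gamma z) {0..}"
    using Gamma_integral_complex[OF assms] .
  have g: "((\<lambda>t. t powr (Re z - 1) / exp t) has_integral Gamma (Re z)) {0..}"
    using Gamma_integral_real[OF assms] .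
  have "norm (of_real t powr (z - 1) / of_real (exp t)) \<le> t powr (Re z - 1) / exp t"
    if "t \<in> {0..}" for t
    using that by (simp add: norm_divide norm_powr_real_powr)
  from integral_norm_bound_integral[OF has_integral_integrable[OF f] has_integral_integrable[OF g]
      this]
  show ?thesis by (simp add: integral_unique[OF f] integral_unique[OF g])
qed

lemma norm_Gamma_Complex_le:
  fixes c t :: real
  assumes "c > 0"
  shows "norm (Gamma (Complex c t)) \<le> Gamma (c + 2) / (c\<^sup>2 + t\<^sup>2)"
proof -
  define z where "z = Complex c t"
  have z: "z \<notin> \<int>\<^sub>\<le>\<^sub>0" "z + 1 \<notin> \<int>\<^sub>\<le>\<^sub>0"
    using assms by (auto elim!: nonpos_Ints_cases simp: z_def complex_eq_iff)
  have "Gamma (z + 2) = (z + 1) * z * Gamma z"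
    using Gamma_plus1[OF z(2)] Gamma_plus1[OF z(1)] by (simp add: add.assoc)
  moreover have "norm (Gamma (z + 2)) \<le> Gamma (c + 2)"
    using norm_Gamma_le_Gamma_Re[of "z + 2"] assms by (simp add: z_def)
  ultimately have "norm (z + 1) * norm z * norm (Gamma z) \<le> Gamma (c + 2)"
    by (simp add: norm_mult)
  moreover have "norm z * norm z \<le> norm (z + 1) * norm z"
    using assms by (intro mult_right_mono) (auto simp: z_def cmod_def intro!: real_sqrt_le_mono)
  moreover have "norm z * norm z = c\<^sup>2 + t\<^sup>2"
    by (simp add: z_def cmod_def flip: power2_eq_square)
  ultimately have "(c\<^sup>2 + t\<^sup>2) * norm (Gamma z) \<le> Gamma (c + 2)"
    by (metis mult_right_mono norm_ge_zero order_trans)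
  moreover have "c\<^sup>2 + t\<^sup>2 > 0" using assms by (simp add: add_pos_nonneg)
  ultimately show ?thesis
    by (simp add: z_def le_divide_eq mult.commute)
qed

lemma continuous_on_Gamma_Complex: "c > 0 \<Longrightarrow> continuous_on UNIV (\<lambda>t. Gamma (Complex c t))"
  unfolding Complex_eq
  by (intro continuous_at_imp_continuous_on ballI continuous_intros)
     (auto elim!: nonpos_Ints_cases simp: complex_eq_iff)

lemma integrable_Gamma_Complex:
  assumes c: "c > 0"
  shows "integrable lborel (\<lambda>t. Gamma (Complex c t))"
proof (rule Bochner_Integration.integrable_bound)
  define m where "m = min 1 (c\<^sup>2)"
  have m: "m > 0" using c by (simp add: m_def)
  have "integrable lborel (\<lambda>t. Gamma (c + 2) / m * inverse (1 + t\<^sup>2))"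
    using integrable_inverse_1_plus_square by (simp add: set_integrable_def)
  thus "integrable lborel (\<lambda>t. Gamma (c + 2) / (m * (1 + t\<^sup>2)))"
    by (simp add: field_simps)
  show "(\<lambda>t. Gamma (Complex c t)) \<in> borel_measurable lborel"
    using continuous_on_Gamma_Complex[OF c] by (simp add: borel_measurable_continuous_onI)
  show "AE t in lborel. norm (Gamma (Complex c t)) \<le> norm (Gamma (c + 2) / (m * (1 + t\<^sup>2)))"
  proof (intro AE_I2)
    fix t :: real
    have "m * (1 + t\<^sup>2) \<le> c\<^sup>2 + t\<^sup>2"
      using mult_left_le_one_le[of "t\<^sup>2" m] m by (simp add: m_def distrib_left)
    hence "Gamma (c + 2) / (c\<^sup>2 + t\<^sup>2) \<le> Gamma (c + 2) / (m * (1 + t\<^sup>2))"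
      using c m Gamma_real_pos[of "c + 2"]
      by (intro frac_le) (auto intro!: mult_pos_pos add_pos_nonneg)
    with norm_Gamma_Complex_le[OF c, of t]
    show "norm (Gamma (Complex c t)) \<le> norm (Gamma (c + 2) / (m * (1 + t\<^sup>2)))"
      using m Gamma_real_pos[of "c + 2"] c by (simp add: abs_of_pos add_pos_nonneg)
  qed
qed

section \<open>Fourier inversion for integrable characteristic functions\<close>

definition fourier_transform :: "(real \<Rightarrow> complex) \<Rightarrow> real \<Rightarrow> complex" where
  "fourier_transform \<phi> x = (CLBINT t. iexp (- (t * x)) * \<phi> t)"

definition Levy_kernel :: "real \<Rightarrow> real \<Rightarrow> real \<Rightarrow> complex" where
  "Levy_kernel a b t = (iexp (- (t * a)) - iexp (- (t * b))) / (\<i> * t)"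

lemma borel_measurable_Levy_kernel [measurable]: "Levy_kernel a b \<in> borel_measurable borel"
  unfolding Levy_kernel_def by measurable

lemma norm_Levy_kernel_le:
  assumes "a \<le> b"
  shows "norm (Levy_kernel a b t) \<le> b - a"
proof (cases "t = 0")
  case False
  have "Levy_kernel a b t = (iexp ((- t) * b) - iexp ((- t) * a)) / (\<i> * (- t))"
    unfolding Levy_kernel_def using False by (simp add: field_simps)
  thus ?thesis using Levy_Inversion_aux2[OF assms, of "- t"] False by simp
qed (use assms in \<open>simp add: Levy_kernel_def\<close>)

lemma Levy_kernel_eq_integral:
  assumes t: "t \<noteq> 0" and ab: "a \<le> b"
  shows "Levy_kernel a b t = (CLBINT x. indicator {a..b} x *\<^sub>R iexp (- (t * x)))"
proof -
  define G where "G x = iexp (- (t * x)) / (- (\<i> * t))" for x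
  have "(G has_vector_derivative iexp (- (t * x))) (at x within {min a b..max a b})" for x
  proof -
    define h where "h z = exp (- (\<i> * t * z)) / (- (\<i> * t))" for z
    have "(h has_field_derivative exp (- (\<i> * t * x))) (at x)"
      unfolding h_def using t by (auto intro!: derivative_eq_intros simp: field_simps)
    hence "((\<lambda>x. h (of_real x)) has_vector_derivative exp (- (\<i> * t * x)))
        (at x within {min a b..max a b})"
      by (rule has_vector_derivative_real_field)
    moreover have "(\<lambda>x. h (of_real x)) = G" unfolding h_def G_def by (auto simp: mult_ac)
    ultimately show ?thesis by (simp add: mult_ac)
  qed
  hence "(CLBINT x=a..b. iexp (- (t * x))) = G b - G a"
    by (intro interval_integral_FTC_finite continuous_intros)
  also have "G b - G a = Levy_kernel a b t"
    unfolding G_def Levy_kernel_def using t by (simp add: field_simps)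
  finally show ?thesis
    using ab by (simp add: interval_integral_Icc set_lebesgue_integral_def)
qed

lemma continuous_on_fourier_transform:
  assumes \<phi>: "integrable lborel \<phi>"
  shows "continuous_on UNIV (fourier_transform \<phi>)"
proof -
  have [measurable]: "\<phi> \<in> borel_measurable borel" using borel_measurable_integrable[OF \<phi>] by simp
  have "isCont (fourier_transform \<phi>) x" for x
    unfolding continuous_at_sequentially
  proof (intro allI impI)
    fix X assume X: "X \<longlonglongrightarrow> x"
    have "(\<lambda>n. CLBINT t. iexp (- (t * X n)) * \<phi> t) \<longlonglongrightarrow> (CLBINT t. iexp (- (t * x)) * \<phi> t)"
    proof (rule integral_dominated_convergence[where w = "\<lambda>t. norm (\<phi> t)"])
      show "AE t in lborel. (\<lambda>n. iexp (- (t * X n)) * \<phi> t) \<longlonglongrightarrow> iexp (- (t * x)) * \<phi> t"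
        by (intro AE_I2 tendsto_intros X)
      show "\<And>n. AE t in lborel. norm (iexp (- (t * X n)) * \<phi> t) \<le> norm (\<phi> t)"
        by (intro AE_I2) (simp add: norm_mult)
    qed (use \<phi> in simp_all)
    thus "(fourier_transform \<phi> \<circ> X) \<longlonglongrightarrow> fourier_transform \<phi> x"
      by (simp add: fourier_transform_def o_def)
  qed
  thus ?thesis by (intro continuous_at_imp_continuous_on) auto
qed

lemma integrable_fourier_kernel_interval:
  assumes \<phi>: "integrable lborel \<phi>" and ab: "a \<le> b"
  shows "integrable (lborel \<Otimes>\<^sub>M lborel)
    (\<lambda>(t, x). indicator {a..b} x *\<^sub>R (iexp (- (t * x)) * \<phi> t))"
proof -
  have [measurable]: "\<phi> \<in> borel_measurable borel" using borel_measurable_integrable[OF \<phi>] by simp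
  define H where "H p = indicator {a..b} (snd p) *\<^sub>R (iexp (- (fst p * snd p)) * \<phi> (fst p))"
    for p :: "real \<times> real"
  have "integrable (lborel \<Otimes>\<^sub>M lborel) H"
  proof (rule lborel_pair.Fubini_integrable)
    have "(\<integral>x. norm (H (t, x)) \<partial>lborel) = (\<integral>x. indicator {a..b} x * norm (\<phi> t) \<partial>lborel)" for t
      by (rule Bochner_Integration.integral_cong) (auto simp: H_def norm_mult split: split_indicator)
    thus "integrable lborel (\<lambda>t. \<integral>x. norm (H (t, x)) \<partial>lborel)" using \<phi> ab by simp
    have "integrable lborel (\<lambda>x. indicator {a..b} x *\<^sub>R (iexp (- (t * x)) * \<phi> t))" for t
      by (intro borel_integrable_compact continuous_intros) auto
    thus "AE t in lborel. integrable lborel (\<lambda>x. H (t, x))" by (simp add: H_def)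
  qed (unfold H_def, measurable)
  thus ?thesis by (simp add: H_def[abs_def] case_prod_beta')
qed

lemma integral_fourier_transform_interval:
  assumes \<phi>: "integrable lborel \<phi>" and ab: "a \<le> b"
  shows "integral {a..b} (fourier_transform \<phi>) = (CLBINT t. Levy_kernel a b t * \<phi> t)"
proof -
  have "(CLBINT t. Levy_kernel a b t * \<phi> t)
      = (CLBINT t. CLBINT x. indicator {a..b} x *\<^sub>R (iexp (- (t * x)) * \<phi> t))"
  proof (rule integral_cong_AE)
    show "AE t in lborel. Levy_kernel a b t * \<phi> t
        = (CLBINT x. indicator {a..b} x *\<^sub>R (iexp (- (t * x)) * \<phi> t))"
      using AE_lborel_singleton[of 0]
      by eventually_elim (simp add: Levy_kernel_eq_integral[OF _ ab] flip: integral_mult_left_zero)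
  qed (use borel_measurable_integrable[OF \<phi>] in simp_all)
  also have "\<dots> = (CLBINT x. CLBINT t. indicator {a..b} x *\<^sub>R (iexp (- (t * x)) * \<phi> t))"
    using lborel_pair.Fubini_integral[OF integrable_fourier_kernel_interval[OF \<phi> ab]] by simp
  also have "\<dots> = (CLBINT x. indicator {a..b} x *\<^sub>R fourier_transform \<phi> x)"
    by (simp add: fourier_transform_def)
  also have "\<dots> = integral {a..b} (fourier_transform \<phi>)"
  proof -
    have "set_integrable lborel {a..b} (fourier_transform \<phi>)"
      unfolding set_integrable_def using continuous_on_fourier_transform[OF \<phi>]
      by (intro borel_integrable_compact) (auto intro: continuous_on_subset)
    from set_borel_integral_eq_integral(2)[OF this] show ?thesis
      by (simp add: set_lebesgue_integral_def)
  qed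
  finally show ?thesis ..
qed

context real_distribution
begin

lemma Levy_inversion_integrable_char:
  assumes \<phi>: "integrable lborel (char M)" and ab: "a \<le> b"
    and atoms: "measure M {a} = 0" "measure M {b} = 0"
  shows "(CLBINT t. Levy_kernel a b t * char M t) = of_real (2 * pi * measure M {a<..b})"
proof -
  define s where "s T t = indicator {- real T<..<real T} t *\<^sub>R (Levy_kernel a b t * char M t)"
    for T :: nat and t :: real
  have truncated: "(\<lambda>T. complex_of_real (1 / (2 * pi)) * (CLBINT t. s T t))
      \<longlonglongrightarrow> complex_of_real (measure M {a<..b})"
    using Levy_Inversion[OF ab atoms]
    by (simp add: interval_lebesgue_integral_def set_lebesgue_integral_def s_def Levy_kernel_def)
  have "(\<lambda>T. CLBINT t. s T t) \<longlonglongrightarrow> (CLBINT t. Levy_kernel a b t * char M t)"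
  proof (rule integral_dominated_convergence[where w = "\<lambda>t. (b - a) * norm (char M t)"])
    show "AE t in lborel. (\<lambda>T. s T t) \<longlonglongrightarrow> Levy_kernel a b t * char M t"
    proof (intro AE_I2 tendsto_eventually)
      fix t :: real
      obtain T0 :: nat where T0: "\<bar>t\<bar> < real T0" using reals_Archimedean2 by blast
      show "eventually (\<lambda>T. s T t = Levy_kernel a b t * char M t) sequentially"
        by (rule eventually_mono[OF eventually_ge_at_top[of T0]])
           (use T0 in \<open>auto simp: s_def indicator_def\<close>)
    qed
    show "AE t in lborel. norm (s T t) \<le> (b - a) * norm (char M t)" for T
    proof (intro AE_I2)
      fix t
      have "norm (s T t) \<le> norm (Levy_kernel a b t) * norm (char M t)"
        by (auto simp: s_def norm_mult split: split_indicator)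
      also have "\<dots> \<le> (b - a) * norm (char M t)"
        by (intro mult_right_mono norm_Levy_kernel_le ab) auto
      finally show "norm (s T t) \<le> (b - a) * norm (char M t)" .
    qed
  qed (use \<phi> in \<open>simp_all add: s_def\<close>)
  hence "(\<lambda>T. complex_of_real (1 / (2 * pi)) * (CLBINT t. s T t))
      \<longlonglongrightarrow> complex_of_real (1 / (2 * pi)) * (CLBINT t. Levy_kernel a b t * char M t)"
    by (intro tendsto_intros)
  with truncated have "complex_of_real (1 / (2 * pi)) * (CLBINT t. Levy_kernel a b t * char M t)
      = complex_of_real (measure M {a<..b})"
    using LIMSEQ_unique by blast
  thus ?thesis by (simp add: field_simps)
qed

lemma fourier_transform_char_eq_deriv_cdf:
  assumes \<phi>: "integrable lborel (char M)" and atoms: "\<And>x. measure M {x} = 0"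
    and D: "(cdf M has_real_derivative D) (at \<beta>)"
  shows "fourier_transform (char M) \<beta> = of_real (2 * pi * D)"
proof -
  define a where "a = \<beta> - 1"
  define L where "L y = integral {a..y} (fourier_transform (char M))" for y
  have "(L has_vector_derivative fourier_transform (char M) \<beta>) (at \<beta> within {a..\<beta> + 1})"
    unfolding L_def
    by (intro integral_has_vector_derivative
        continuous_on_subset[OF continuous_on_fourier_transform[OF \<phi>]]) (auto simp: a_def)
  hence L': "(L has_vector_derivative fourier_transform (char M) \<beta>) (at \<beta>)"
    using at_within_interior[of \<beta> "{a..\<beta> + 1}"] by (simp add: a_def)
  have R': "((\<lambda>y. of_real (2 * pi * (cdf M y - cdf M a))) has_vector_derivative
      complex_of_real (2 * pi * D)) (at \<beta>)"
    using DERIV_diff[OF D DERIV_const[of "cdf M a"]]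
    by (intro has_vector_derivative_of_real DERIV_cmult) simp
  have R_eq_L: "of_real (2 * pi * (cdf M y - cdf M a)) = L y" if "y \<in> {a<..}" for y
  proof -
    have y: "a < y" using that by simp
    have "L y = (CLBINT t. Levy_kernel a y t * char M t)"
      unfolding L_def using y by (intro integral_fourier_transform_interval[OF \<phi>]) simp
    also have "\<dots> = of_real (2 * pi * measure M {a<..y})"
      using y by (intro Levy_inversion_integrable_char[OF \<phi> _ atoms atoms]) simp
    finally show ?thesis by (simp add: cdf_diff_eq[OF y])
  qed
  have "(L has_vector_derivative complex_of_real (2 * pi * D)) (at \<beta>)"
    by (rule has_vector_derivative_transform_within_open[OF R' open_greaterThan[of a] _ R_eq_L])
      (simp add: a_def)
  with L' show ?thesis using vector_derivative_unique_at by blast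
qed

end

section \<open>The Cahen-Mellin integral\<close>

lemma of_real_powr_eq_exp: "x > 0 \<Longrightarrow> (of_real x :: complex) powr z = exp (z * of_real (ln x))"
  by (simp add: powr_def Ln_of_real)

lemma of_real_powr_Complex:
  assumes "y > 0"
  shows "of_real y powr Complex a b = of_real (y powr a) * iexp (b * ln y)"
proof -
  have "of_real y powr Complex a b = exp (Complex a b * of_real (ln y))"
    by (rule of_real_powr_eq_exp[OF assms])
  also have "Complex a b * of_real (ln y) = of_real (a * ln y) + \<i> * of_real (b * ln y)"
    by (simp add: complex_eq_iff)
  also have "exp \<dots> = of_real (y powr a) * iexp (b * ln y)"
    unfolding exp_add using assms by (simp add: powr_def flip: exp_of_real)
  finally show ?thesis .
qed

definition gamma_density :: "real \<Rightarrow> real \<Rightarrow> real" where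
  "gamma_density c u = (if u > 0 then u powr (c - 1) / exp u / Gamma c else 0)"

definition log_gamma_distribution :: "real \<Rightarrow> real measure" where
  "log_gamma_distribution c = distr (density lborel (\<lambda>u. ennreal (gamma_density c u))) borel ln"

lemma gamma_density_nonneg: "c > 0 \<Longrightarrow> gamma_density c u \<ge> 0"
  by (simp add: gamma_density_def)

lemma borel_measurable_gamma_density [measurable]: "gamma_density c \<in> borel_measurable borel"
  unfolding gamma_density_def by measurable

lemma continuous_on_gamma_density: "c > 0 \<Longrightarrow> continuous_on {0<..} (gamma_density c)"
  by (rule continuous_on_cong[THEN iffD1, OF refl _ continuous_on_divide])
     (auto simp: gamma_density_def intro!: continuous_intros dest: Gamma_real_pos)

lemma nn_integral_gamma_density:
  assumes c: "c > 0"
  shows "(\<integral>\<^sup>+u. ennreal (gamma_density c u) \<partial>lborel) = 1"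
proof -
  have "((\<lambda>u. u powr (c - 1) / exp u / Gamma c) has_integral Gamma c / Gamma c) {0..}"
    by (intro has_integral_divide Gamma_integral_real c)
  hence "(\<integral>\<^sup>+u. ennreal (u powr (c - 1) / exp u / Gamma c) * indicator {0..} u \<partial>lborel) = 1"
    using Gamma_real_pos[OF c] by (subst nn_integral_has_integral_lebesgue') auto
  moreover have "ennreal (gamma_density c u)
      = ennreal (u powr (c - 1) / exp u / Gamma c) * indicator {0..} u" for u
    by (cases "u = 0") (auto simp: gamma_density_def split: split_indicator)
  ultimately show ?thesis by simp
qed

lemma real_distribution_log_gamma:
  assumes c: "c > 0"
  shows "real_distribution (log_gamma_distribution c)"
proof -
  have "prob_space (density lborel (\<lambda>u. ennreal (gamma_density c u)))"
    by (rule prob_spaceI) (simp add: emeasure_density nn_integral_gamma_density c)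
  then interpret G: prob_space "density lborel (\<lambda>u. ennreal (gamma_density c u))" .
  interpret prob_space "log_gamma_distribution c"
    unfolding log_gamma_distribution_def by (rule G.prob_space_distr) simp
  show ?thesis by unfold_locales (simp add: log_gamma_distribution_def)
qed

lemma emeasure_log_gamma:
  assumes "S \<in> sets borel"
  shows "emeasure (log_gamma_distribution c) S
    = (\<integral>\<^sup>+u. ennreal (gamma_density c u) * indicator (ln -` S) u \<partial>lborel)"
proof -
  have "ln -` S \<in> sets borel" using measurable_sets[of ln borel borel S] assms by simp
  thus ?thesis unfolding log_gamma_distribution_def using assms
    by (subst emeasure_distr) (auto simp: emeasure_density)
qed

lemma measure_log_gamma_singleton: "measure (log_gamma_distribution c) {a} = 0"
proof -
  have "emeasure (log_gamma_distribution c) {a} = (\<integral>\<^sup>+(u::real). 0 \<partial>lborel)"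
    unfolding emeasure_log_gamma[OF borel_singleton[OF sets.empty_sets]]
  proof (rule nn_integral_cong_AE)
    show "AE u in lborel. ennreal (gamma_density c u) * indicator (ln -` {a}) u = 0"
      using AE_lborel_singleton[of "exp a"]
      by eventually_elim (auto simp: gamma_density_def split: split_indicator)
  qed
  thus ?thesis by (simp add: measure_def)
qed

lemma measure_log_gamma_interval:
  assumes c: "c > 0" and ab: "a \<le> b"
  shows "measure (log_gamma_distribution c) {a<..b} = integral {exp a..exp b} (gamma_density c)"
proof -
  have "gamma_density c integrable_on {exp a..exp b}"
    by (intro integrable_continuous_interval
        continuous_on_subset[OF continuous_on_gamma_density[OF c]])
       (auto intro: less_le_trans[OF exp_gt_zero])
  hence int: "(gamma_density c has_integral integral {exp a..exp b} (gamma_density c))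
      {exp a..exp b}"
    by (rule integrable_integral)
  have "emeasure (log_gamma_distribution c) {a<..b}
      = (\<integral>\<^sup>+u. ennreal (gamma_density c u) * indicator (ln -` {a<..b}) u \<partial>lborel)"
    by (rule emeasure_log_gamma) simp
  also have "\<dots> = (\<integral>\<^sup>+u. ennreal (gamma_density c u) * indicator {exp a..exp b} u \<partial>lborel)"
  proof (rule nn_integral_cong_AE)
    have iff: "u \<in> ln -` {a<..b} \<longleftrightarrow> u \<in> {exp a..exp b}" if "u > 0" "u \<noteq> exp a" for u
    proof -
      have "a < ln u \<longleftrightarrow> exp a < u" "ln u \<le> b \<longleftrightarrow> u \<le> exp b"
        using \<open>u > 0\<close> by (metis exp_less_cancel_iff exp_ln, metis exp_le_cancel_iff exp_ln)
      thus ?thesis using \<open>u \<noteq> exp a\<close> by auto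
    qed
    show "AE u in lborel. ennreal (gamma_density c u) * indicator (ln -` {a<..b}) u
        = ennreal (gamma_density c u) * indicator {exp a..exp b} u"
      using AE_lborel_singleton[of "exp a"]
      by eventually_elim (use iff in \<open>auto simp: gamma_density_def split: split_indicator\<close>)
  qed
  also have "\<dots> = ennreal (integral {exp a..exp b} (gamma_density c))"
    by (rule nn_integral_has_integral_lebesgue'[OF _ int]) (simp add: gamma_density_nonneg c)
  finally show ?thesis
    using integral_nonneg[OF has_integral_integrable[OF int]] gamma_density_nonneg[OF c]
    by (simp add: measure_def)
qed

lemma char_log_gamma:
  assumes c: "c > 0"
  shows "char (log_gamma_distribution c) t = Gamma (Complex c t) / of_real (Gamma c)"
proof -
  define h where "h u = gamma_density c u *\<^sub>R iexp (t * ln u)" for u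
  have [measurable]: "h \<in> borel_measurable borel" unfolding h_def by measurable
  have "char (log_gamma_distribution c) t = (CLBINT u. h u)"
    unfolding char_def log_gamma_distribution_def h_def
    by (subst integral_distr) (auto simp: integral_density gamma_density_nonneg c)
  moreover have "integrable lborel h"
  proof (rule Bochner_Integration.integrable_bound)
    show "integrable lborel (gamma_density c)"
      by (rule integrableI_nn_integral_finite[where x=1])
         (auto simp: gamma_density_nonneg c nn_integral_gamma_density)
  qed (auto simp: h_def gamma_density_nonneg c)
  moreover have "(h has_integral Gamma (Complex c t) / of_real (Gamma c)) UNIV"
  proof -
    have "((\<lambda>u. of_real u powr (Complex c t - 1) / of_real (exp u) / of_real (Gamma c))
        has_integral Gamma (Complex c t) / of_real (Gamma c)) {0<..}"
      using c by (intro has_integral_divide Gamma_integral_complex') simp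
    moreover have "Complex c t - 1 = Complex (c - 1) t" by (simp add: complex_eq_iff)
    ultimately have "(h has_integral Gamma (Complex c t) / of_real (Gamma c)) {0<..}"
      by (subst has_integral_cong[where g = h, symmetric])
         (auto simp: h_def gamma_density_def of_real_powr_Complex scaleR_conv_of_real)
    moreover have "(\<lambda>u. if u \<in> {0<..} then h u else 0) = h"
      by (auto simp: h_def gamma_density_def)
    ultimately show ?thesis
      using has_integral_restrict_UNIV[of "{0<..}" h] by simp
  qed
  ultimately show ?thesis
    using has_integral_integral_lborel has_integral_unique by metis
qed

lemma integrable_char_log_gamma:
  assumes "c > 0"
  shows "integrable lborel (char (log_gamma_distribution c))"
proof -
  have "char (log_gamma_distribution c) = (\<lambda>t. Gamma (Complex c t) / of_real (Gamma c))"
    using char_log_gamma[OF assms] by auto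
  thus ?thesis using integrable_Gamma_Complex[OF assms] by simp
qed

lemma has_real_derivative_cdf_log_gamma:
  assumes c: "c > 0"
  shows "(cdf (log_gamma_distribution c) has_real_derivative gamma_density c (exp \<beta>) * exp \<beta>)
    (at \<beta>)"
proof -
  interpret real_distribution "log_gamma_distribution c"
    by (rule real_distribution_log_gamma[OF c])
  define a where "a = \<beta> - 1"
  define I where "I w = integral {exp a..w} (gamma_density c)" for w
  have "(I has_real_derivative gamma_density c (exp \<beta>)) (at (exp \<beta>) within {exp a..exp (\<beta> + 1)})"
    unfolding I_def
    by (intro integral_has_real_derivative
        continuous_on_subset[OF continuous_on_gamma_density[OF c]])
       (auto simp: a_def intro: less_le_trans[OF exp_gt_zero])
  hence "(I has_real_derivative gamma_density c (exp \<beta>)) (at (exp \<beta>))"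
    using at_within_interior[of "exp \<beta>" "{exp a..exp (\<beta> + 1)}"] by (simp add: a_def)
  hence shifted: "((\<lambda>y. cdf (log_gamma_distribution c) a + I (exp y))
      has_real_derivative gamma_density c (exp \<beta>) * exp \<beta>) (at \<beta>)"
    by (auto intro!: derivative_eq_intros DERIV_chain2[where f = I])
  have eq: "cdf (log_gamma_distribution c) a + I (exp y) = cdf (log_gamma_distribution c) y"
    if "y \<in> {a<..}" for y
    using that cdf_diff_eq[of a y] measure_log_gamma_interval[OF c, of a y] by (simp add: I_def)
  show ?thesis
    by (rule has_field_derivative_transform_within_open[OF shifted open_greaterThan[of a] _ eq])
      (simp add: a_def)
qed

lemma has_bochner_integral_Gamma_powr:
  assumes c: "c > 0" and y: "y > 0"
  shows "has_bochner_integral lborel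
    (\<lambda>t. Gamma (Complex c t) / (2 * pi) * of_real y powr - Complex c t) (exp (- y))"
proof -
  interpret real_distribution "log_gamma_distribution c"
    by (rule real_distribution_log_gamma[OF c])
  define \<phi> where "\<phi> = char (log_gamma_distribution c)"
  define K where "K = complex_of_real (Gamma c * y powr - c / (2 * pi))"
  have Gamma_powr: "Gamma (Complex c t) / (2 * pi) * of_real y powr - Complex c t
      = K * (iexp (- (t * ln y)) * \<phi> t)" for t
  proof -
    have "- Complex c t = Complex (- c) (- t)" by (simp add: complex_eq_iff)
    thus ?thesis using y Gamma_real_pos[OF c]
      by (simp add: K_def \<phi>_def char_log_gamma[OF c] of_real_powr_Complex field_simps)
  qed
  have [measurable]: "\<phi> \<in> borel_measurable borel" unfolding \<phi>_def by (rule char_measurable)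
  have "integrable lborel (\<lambda>t. iexp (- (t * ln y)) * \<phi> t)"
    using integrable_char_log_gamma[OF c] unfolding \<phi>_def
    by (rule Bochner_Integration.integrable_bound) (auto simp: norm_mult \<phi>_def)
  moreover have "fourier_transform \<phi> (ln y)
      = of_real (2 * pi * (gamma_density c (exp (ln y)) * exp (ln y)))"
    unfolding \<phi>_def
    by (intro fourier_transform_char_eq_deriv_cdf integrable_char_log_gamma
        measure_log_gamma_singleton has_real_derivative_cdf_log_gamma c)
  hence "K * fourier_transform \<phi> (ln y) = exp (- y)"
    using Gamma_real_pos[OF c] y
    by (simp add: K_def gamma_density_def powr_diff powr_minus exp_minus field_simps)
  ultimately show ?thesis
    unfolding Gamma_powr fourier_transform_def
    by (simp add: has_bochner_integral_iff)
qed

section \<open>Termwise integration of Dirichlet series\<close>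

lemma norm_of_real_powr_Complex: "y > 0 \<Longrightarrow> norm (of_real y powr - Complex c t) = y powr - c"
  by (simp add: norm_powr_real_powr)

lemma norm_of_nat_powr: "norm ((of_nat n :: complex) powr z) = real n powr Re z"
  using norm_powr_real_powr[of "of_nat n" z] by simp

lemma summable_Suc_powr: "p > 1 \<Longrightarrow> summable (\<lambda>m. real (Suc m) powr - p)"
  using summable_real_powr_iff[of "- p"] summable_Suc_iff[of "\<lambda>n. real n powr - p"] by simp

lemma has_integral_has_bochner_integral_lborel:
  fixes f :: "'a::euclidean_space \<Rightarrow> 'b::euclidean_space"
  assumes "has_bochner_integral lborel f x"
  shows "(f has_integral x) UNIV"
  using has_integral_integral_lborel[OF integrable.intros[OF assms]]
  unfolding has_bochner_integral_integral_eq[OF assms] .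

lemma has_bochner_integral_mult_suminf_powr:
  fixes F G :: "real \<Rightarrow> complex" and a :: "nat \<Rightarrow> complex" and y :: "nat \<Rightarrow> real"
  assumes F: "\<And>Y. Y > 0 \<Longrightarrow>
      has_bochner_integral lborel (\<lambda>t. F t * of_real Y powr - Complex c t) (G Y)"
    and y: "\<And>m. y m > 0"
    and summable: "summable (\<lambda>m. norm (a m) * y m powr - c)"
  shows "has_bochner_integral lborel (\<lambda>t. F t * (\<Sum>m. a m * of_real (y m) powr - Complex c t))
    (\<Sum>m. a m * G (y m))"
proof -
  define f where "f m t = a m * (F t * of_real (y m) powr - Complex c t)" for m t
  have f: "has_bochner_integral lborel (f m) (a m * G (y m))" for m
    unfolding f_def by (intro has_bochner_integral_mult_right F y)
  have norm_f: "norm (f m t) = norm (a m) * y m powr - c * norm (F t)" for m t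
    using y[of m] by (simp add: f_def norm_mult norm_of_real_powr_Complex)
  have summable_f: "summable (\<lambda>m. norm (f m t))" for t
    unfolding norm_f by (intro summable_mult2 summable)
  have "summable (\<lambda>m. \<integral>t. norm (f m t) \<partial>lborel)"
    unfolding norm_f by (simp add: summable_mult2 summable)
  note suminf_f = integrable_suminf[OF _ AE_I2[OF summable_f] this]
    integral_suminf[OF _ AE_I2[OF summable_f] this]
  have "F t * (\<Sum>m. a m * of_real (y m) powr - Complex c t) = (\<Sum>m. f m t)" for t
  proof -
    have "summable (\<lambda>m. norm (a m * of_real (y m) powr - Complex c t))"
      using summable by (simp add: norm_mult norm_of_real_powr_Complex y)
    thus ?thesis
      unfolding f_def
      by (subst suminf_mult[symmetric]) (auto intro: summable_norm_cancel simp: mult_ac)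
  qed
  with suminf_f f show ?thesis
    by (simp add: has_bochner_integral_iff)
qed

lemma suminf_divide_powr_mult_powr:
  fixes a :: "nat \<Rightarrow> complex"
  assumes a: "summable (\<lambda>m. norm (a m) * real (Suc m) powr - c)" and Y: "Y > 0"
  shows "(\<Sum>m. a m / of_nat (Suc m) powr Complex c t) * of_real Y powr - Complex c t
    = (\<Sum>m. a m * of_real (real (Suc m) * Y) powr - Complex c t)"
proof -
  have "summable (\<lambda>m. norm (a m / of_nat (Suc m) powr Complex c t))"
    using a unfolding norm_divide norm_of_nat_powr by (simp add: powr_minus divide_inverse)
  hence "(\<Sum>m. a m / of_nat (Suc m) powr Complex c t) * of_real Y powr - Complex c t
      = (\<Sum>m. a m / of_nat (Suc m) powr Complex c t * of_real Y powr - Complex c t)"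
    by (rule suminf_mult2[OF summable_norm_cancel])
  also have "\<dots> = (\<Sum>m. a m * of_real (real (Suc m) * Y) powr - Complex c t)"
    using Y by (simp add: powr_times_real powr_minus divide_inverse mult_ac)
  finally show ?thesis .
qed

lemma has_bochner_integral_Gamma_Dirichlet_series:
  fixes a :: "nat \<Rightarrow> complex"
  assumes c: "c > 0" and a: "summable (\<lambda>m. norm (a m) * real (Suc m) powr - c)" and Y: "Y > 0"
  shows "has_bochner_integral lborel
    (\<lambda>t. Gamma (Complex c t) / (2 * pi) * (\<Sum>m. a m / of_nat (Suc m) powr Complex c t)
      * of_real Y powr - Complex c t)
    (\<Sum>m. a m * exp (- (real (Suc m) * Y)))"
proof -
  have "summable (\<lambda>m. norm (a m) * (real (Suc m) * Y) powr - c)"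
    using summable_mult2[OF a, of "Y powr - c"] Y by (simp add: powr_mult mult_ac)
  with Y show ?thesis
    unfolding mult.assoc[of "Gamma _ / _"] suminf_divide_powr_mult_powr[OF a Y]
    by (intro has_bochner_integral_mult_suminf_powr[OF has_bochner_integral_Gamma_powr[OF c]])
      simp_all
qed

lemma riemann_zeta_mult_powr_eq_suminf:
  fixes s :: complex and Q :: real and N :: nat and k :: int
  assumes s: "Re (of_nat N * s - of_int k) > 1" and Q: "Q > 0"
  shows "riemann_zeta (of_nat N * s - of_int k) * of_real Q powr s
    = (\<Sum>n. of_real (real (Suc n) powr k) * of_real (real (Suc n) ^ N / Q) powr - s)"
proof -
  define w where "w = of_nat N * s - of_int k"
  have "summable (\<lambda>n. norm (1 / of_nat (Suc n) powr w))"
    using summable_Suc_powr[OF s[folded w_def]]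
    unfolding norm_divide norm_of_nat_powr by (simp add: powr_minus divide_inverse)
  hence "riemann_zeta w * of_real Q powr s = (\<Sum>n. 1 / of_nat (Suc n) powr w * of_real Q powr s)"
    unfolding riemann_zeta_def by (rule suminf_mult2[OF summable_norm_cancel])
  also have "\<dots> = (\<Sum>n. of_real (real (Suc n) powr k) * of_real (real (Suc n) ^ N / Q) powr - s)"
  proof (rule suminf_cong)
    fix n
    define l where "l = ln (real (Suc n))"
    have "of_nat (Suc n) powr w = exp (w * of_real l)"
      using of_real_powr_eq_exp[of "real (Suc n)" w] by (simp add: l_def del: of_nat_Suc)
    hence "1 / of_nat (Suc n) powr w * of_real Q powr s
        = exp (- (w * of_real l) + s * of_real (ln Q))"
      using Q by (simp add: of_real_powr_eq_exp exp_diff field_simps)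
    also have "- (w * of_real l) + s * of_real (ln Q)
        = of_real (k * l) + - s * of_real (N * l - ln Q)"
      by (simp add: w_def algebra_simps)
    also have "exp \<dots> = of_real (real (Suc n) powr k) * of_real (real (Suc n) ^ N / Q) powr - s"
    proof -
      have "ln (real (Suc n) ^ N / Q) = N * l - ln Q"
        using Q by (simp add: ln_div ln_realpow l_def del: of_nat_Suc)
      hence "of_real (real (Suc n) ^ N / Q) powr - s = exp (- s * of_real (N * l - ln Q))"
        using Q by (subst of_real_powr_eq_exp) simp_all
      moreover have "(of_real (real (Suc n) powr k) :: complex) = exp (of_real (k * l))"
        by (simp add: powr_def l_def del: of_nat_Suc flip: exp_of_real)
      ultimately show ?thesis by (simp add: mult_exp_exp)
    qed
    finally show "1 / of_nat (Suc n) powr w * of_real Q powr s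
      = of_real (real (Suc n) powr k) * of_real (real (Suc n) ^ N / Q) powr - s" .
  qed
  finally show ?thesis unfolding w_def .
qed

lemma has_bochner_integral_Gamma_Dirichlet_series_zeta:
  fixes a :: "nat \<Rightarrow> complex" and N :: nat and k :: int
  assumes c: "c > 0" and a: "summable (\<lambda>m. norm (a m) * real (Suc m) powr - c)" and Q: "Q > 0"
    and Nck: "real N * c - k > 1"
  shows "has_bochner_integral lborel
    (\<lambda>t. Gamma (Complex c t) / (2 * pi) * (\<Sum>m. a m / of_nat (Suc m) powr Complex c t)
      * riemann_zeta (of_nat N * Complex c t - of_int k) * of_real Q powr Complex c t)
    (\<Sum>n. of_real (real (Suc n) powr k)
      * (\<Sum>m. a m * exp (- (real (Suc m) * (real (Suc n) ^ N / Q)))))"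
proof -
  have "norm (of_real (real (Suc n) powr k) :: complex) * (real (Suc n) ^ N / Q) powr - c
      = Q powr c * real (Suc n) powr - (real N * c - k)" for n
    using Q by (simp add: powr_divide powr_realpow[symmetric] powr_powr powr_minus powr_diff
        powr_add[symmetric] field_simps del: of_nat_Suc)
  hence "summable
      (\<lambda>n. norm (of_real (real (Suc n) powr k) :: complex) * (real (Suc n) ^ N / Q) powr - c)"
    using summable_mult[OF summable_Suc_powr[OF Nck], of "Q powr c"] by simp
  moreover have Re: "Re (of_nat N * Complex c t - of_int k) > 1" for t
    using Nck by simp
  ultimately show ?thesis
    unfolding mult.assoc[of "_ * _" "riemann_zeta _"] riemann_zeta_mult_powr_eq_suminf[OF Re Q]
    by (intro has_bochner_integral_mult_suminf_powr has_bochner_integral_Gamma_Dirichlet_series c a)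
      (use Q in simp_all)
qed

section \<open>Residue classes\<close>

lemma periodic_mod:
  assumes "\<And>n. f (n + q) = f (n :: nat)"
  shows "f (n mod q) = f n"
proof -
  have "f (m + q * j) = f m" for m j
  proof (induction j)
    case (Suc j)
    have "m + q * Suc j = (m + q * j) + q" by simp
    thus ?case using assms[of "m + q * j"] Suc.IH by (simp only:)
  qed simp
  from this[of "n mod q" "n div q"] show ?thesis by simp
qed

lemma periodic_eq_sum_residues:
  assumes periodic: "\<And>n. f (n + q) = f (n :: nat)" and q: "q \<ge> 1"
  shows "f n = (\<Sum>r = 1..q. if [n = r] (mod q) then f r else 0)"
proof -
  define r0 where "r0 = (if n mod q = 0 then q else n mod q)"
  have "r0 mod q = n mod q"
    using q by (simp add: r0_def)
  hence f_r0: "f r0 = f n"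
    using periodic_mod[of f q, OF periodic] by metis
  have "n mod q \<noteq> q" using q by (metis mod_less_divisor less_irrefl less_le_trans zero_less_one)
  hence "r \<in> {1..q} \<and> [n = r] (mod q) \<longleftrightarrow> r = r0" for r
    using q by (cases "r = q") (auto simp: r0_def cong_def)
  hence "(\<Sum>r = 1..q. if [n = r] (mod q) then f r else 0) = f r0"
    by (simp add: sum.If_cases Int_def)
  with f_r0 show ?thesis by simp
qed

lemma summable_norm_if_mult_powr:
  "c > 1 \<Longrightarrow> summable (\<lambda>m. norm (if P m then \<alpha> else 0) * real (Suc m) powr - c)"
  by (rule summable_comparison_test'[OF summable_mult[OF summable_Suc_powr, of c "norm \<alpha>"]]) auto

lemma dirichlet_L_eq_sum_residue_classes:
  assumes chi: "dirichlet_character q chi" and s: "Re s > 1"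
  shows "dirichlet_L s chi
    = (\<Sum>r = 1..q. \<Sum>m. (if [Suc m = r] (mod q) then chi r else 0) / of_nat (Suc m) powr s)"
proof -
  have periodic: "\<And>n. chi (n + q) = chi n" and q: "q \<ge> 1"
    using chi by (simp_all add: dirichlet_character_def)
  have "summable (\<lambda>m. (if [Suc m = r] (mod q) then chi r else 0) / of_nat (Suc m) powr s)" for r
    using summable_norm_if_mult_powr[OF s, of "\<lambda>m. [Suc m = r] (mod q)" "chi r"]
    by (intro summable_norm_cancel[where f = "\<lambda>m. _ m / _ m"])
      (unfold norm_divide norm_of_nat_powr, simp add: powr_minus divide_inverse)
  hence "(\<Sum>m. \<Sum>r = 1..q. (if [Suc m = r] (mod q) then chi r else 0) / of_nat (Suc m) powr s)
      = (\<Sum>r = 1..q. \<Sum>m. (if [Suc m = r] (mod q) then chi r else 0) / of_nat (Suc m) powr s)"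
    by (rule suminf_sum)
  moreover have "chi (Suc m) = (\<Sum>r = 1..q. if [Suc m = r] (mod q) then chi r else 0)" for m
    by (rule periodic_eq_sum_residues[of chi, OF periodic q])
  ultimately show ?thesis
    unfolding dirichlet_L_def by (simp add: sum_divide_distrib)
qed

lemma cong_residue_imp_eq_add_mult:
  fixes n q r :: nat
  assumes "[n = r] (mod q)" and "n > 0" and "r \<in> {1..q}"
  obtains j where "n = r + j * q"
proof -
  have e: "n mod q = r mod q" using assms(1) by (simp add: cong_def)
  have "r \<le> n"
  proof (cases "r = q")
    case True
    thus ?thesis using e assms(2) by (metis mod_self dvd_imp_le mod_0_imp_dvd)
  next
    case False
    hence "r mod q = r" using assms(3) by simp
    thus ?thesis using e by (metis mod_less_eq_dividend)
  qed
  with assms(1) obtain j where "n = j * q + r" by (auto simp: cong_le_nat)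
  thus ?thesis using that[of j] by simp
qed

lemma sums_exp_residue_class:
  fixes q r :: nat and u :: real
  assumes q: "q \<ge> 1" and r: "r \<in> {1..q}" and u: "u > 0"
  shows "(\<lambda>m. if [Suc m = r] (mod q) then exp (- (real (Suc m) * u)) else 0)
    sums (exp (- (real r * u)) / (1 - exp (- (real q * u))))"
proof -
  define f where "f m = (if [Suc m = r] (mod q) then exp (- (real (Suc m) * u)) else 0)" for m
  define g where "g j = r - 1 + j * q" for j
  have mono: "strict_mono g" unfolding g_def using q by (intro strict_monoI) simp
  have outside: "f m = 0" if "m \<notin> range g" for m
  proof (rule ccontr)
    assume "f m \<noteq> 0"
    then obtain j where "Suc m = r + j * q"
      using cong_residue_imp_eq_add_mult[OF _ _ r, of "Suc m"] by (auto simp: f_def split: if_splits)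
    hence "m = g j" unfolding g_def using r by simp
    thus False using that by auto
  qed
  have "f (g j) = exp (- (real r * u)) * exp (- (real q * u)) ^ j" for j
  proof -
    have Suc_g: "Suc (g j) = r + j * q" unfolding g_def using r by simp
    hence "f (g j) = exp (- (real (Suc (g j)) * u))"
      by (simp add: f_def cong_def del: of_nat_Suc)
    also have "- (real (Suc (g j)) * u) = - (real r * u) + real j * (- (real q * u))"
      unfolding Suc_g by (simp add: algebra_simps)
    also have "exp \<dots> = exp (- (real r * u)) * exp (- (real q * u)) ^ j"
      by (simp only: exp_add exp_of_nat_mult)
    finally show ?thesis .
  qed
  moreover have "(\<lambda>j. exp (- (real r * u)) * exp (- (real q * u)) ^ j)
      sums (exp (- (real r * u)) * (1 / (1 - exp (- (real q * u)))))"
    using q u by (intro sums_mult geometric_sums) simp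
  ultimately have "(\<lambda>j. f (g j)) sums (exp (- (real r * u)) / (1 - exp (- (real q * u))))"
    by simp
  hence "f sums (exp (- (real r * u)) / (1 - exp (- (real q * u))))"
    using sums_mono_reindex[of g f, OF mono outside] by blast
  thus ?thesis unfolding f_def[abs_def] .
qed

lemma suminf_residue_class_exp:
  fixes \<alpha> :: complex and q r :: nat and u :: real
  assumes "q \<ge> 1" and "r \<in> {1..q}" and "u > 0"
  shows "(\<Sum>m. (if [Suc m = r] (mod q) then \<alpha> else 0) * exp (- (real (Suc m) * u)))
    = \<alpha> * of_real (exp (- (real r * u)) / (1 - exp (- (real q * u))))"
proof -
  have "(\<lambda>m. \<alpha> * of_real (if [Suc m = r] (mod q) then exp (- (real (Suc m) * u)) else 0))
      sums (\<alpha> * of_real (exp (- (real r * u)) / (1 - exp (- (real q * u)))))"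
    by (intro sums_mult sums_of_real sums_exp_residue_class assms)
  moreover have "(\<lambda>m. \<alpha> * of_real (if [Suc m = r] (mod q) then exp (- (real (Suc m) * u)) else 0))
      = (\<lambda>m. (if [Suc m = r] (mod q) then \<alpha> else 0) * exp (- (real (Suc m) * u)))"
    by auto
  ultimately show ?thesis by (simp add: sums_iff)
qed

lemma has_bochner_integral_Gamma_residue_class_zeta:
  fixes \<alpha> :: complex and q r N :: nat and k :: int
  assumes c: "c > 1" and q: "q \<ge> 1" and r: "r \<in> {1..q}" and x: "x > 0"
    and Nck: "real N * c - k > 1"
  shows "has_bochner_integral lborel
    (\<lambda>t. Gamma (Complex c t) / (2 * pi)
      * (\<Sum>m. (if [Suc m = r] (mod q) then \<alpha> else 0) / of_nat (Suc m) powr Complex c t)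
      * riemann_zeta (of_nat N * Complex c t - of_int k) * of_real (real q / x) powr Complex c t)
    (\<Sum>n. \<alpha> * of_real (real (Suc n) powr k * exp (- (real r / real q) * real (Suc n) ^ N * x)
      / (1 - exp (- (real (Suc n) ^ N * x)))))"
proof -
  define a where "a m = (if [Suc m = r] (mod q) then \<alpha> else 0)" for m
  define y where "y n = real (Suc n) ^ N / (real q / x)" for n
  have "y n > 0" "real r * y n = real r / real q * real (Suc n) ^ N * x"
    "real q * y n = real (Suc n) ^ N * x" for n
    using q x by (simp_all add: y_def field_simps)
  hence "of_real (real (Suc n) powr k) * (\<Sum>m. a m * exp (- (real (Suc m) * y n)))
      = \<alpha> * of_real (real (Suc n) powr k * exp (- (real r / real q) * real (Suc n) ^ N * x)
          / (1 - exp (- (real (Suc n) ^ N * x))))" for n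
    unfolding a_def suminf_residue_class_exp[OF q r \<open>y n > 0\<close>] by (simp add: mult_ac)
  moreover have "has_bochner_integral lborel
      (\<lambda>t. Gamma (Complex c t) / (2 * pi) * (\<Sum>m. a m / of_nat (Suc m) powr Complex c t)
        * riemann_zeta (of_nat N * Complex c t - of_int k) * of_real (real q / x) powr Complex c t)
      (\<Sum>n. of_real (real (Suc n) powr k) * (\<Sum>m. a m * exp (- (real (Suc m) * y n))))"
    unfolding y_def using c q x Nck summable_norm_if_mult_powr[OF c]
    by (intro has_bochner_integral_Gamma_Dirichlet_series_zeta) (simp_all add: a_def)
  ultimately show ?thesis by (simp only: a_def)
qed

lemma has_bochner_integral_Gamma_dirichlet_L_zeta:
  fixes N q :: nat and k :: int
  assumes chi: "dirichlet_character q chi" and c: "c > 1" and x: "x > 0"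
    and Nck: "real N * c - k > 1"
  shows "has_bochner_integral lborel
    (\<lambda>t. Gamma (Complex c t) / (2 * pi) * dirichlet_L (Complex c t) chi
      * riemann_zeta (of_nat N * Complex c t - of_int k) * of_real (real q / x) powr Complex c t)
    (\<Sum>r = 1..q. \<Sum>n. chi r * of_real (real (Suc n) powr k
      * exp (- (real r / real q) * real (Suc n) ^ N * x) / (1 - exp (- (real (Suc n) ^ N * x)))))"
proof -
  have q: "q \<ge> 1" using chi by (simp add: dirichlet_character_def)
  have "has_bochner_integral lborel
      (\<lambda>t. \<Sum>r = 1..q. Gamma (Complex c t) / (2 * pi)
        * (\<Sum>m. (if [Suc m = r] (mod q) then chi r else 0) / of_nat (Suc m) powr Complex c t)
        * riemann_zeta (of_nat N * Complex c t - of_int k) * of_real (real q / x) powr Complex c t)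
      (\<Sum>r = 1..q. \<Sum>n. chi r * of_real (real (Suc n) powr k
        * exp (- (real r / real q) * real (Suc n) ^ N * x) / (1 - exp (- (real (Suc n) ^ N * x)))))"
    using x by (intro has_bochner_integral_sum has_bochner_integral_Gamma_residue_class_zeta c q Nck)
      simp_all
  thus ?thesis
    using c
    by (simp add: dirichlet_L_eq_sum_residue_classes[OF chi] sum_distrib_left sum_distrib_right)
qed

theorem lemma4p1:
  fixes x c0 :: real and N q :: nat and h :: int and chi :: "nat \<Rightarrow> complex"
  assumes "x > 0" and "N \<ge> 1" and "dirichlet_character q chi"
    and "c0 > max 1 ((real N - 2 * real_of_int h + 1) / real N)"
  shows "((\<lambda>t. 1 / (2 * pi * \<i>) *
            (Gamma (Complex c0 t) * dirichlet_L (Complex c0 t) chi *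
             riemann_zeta (of_nat N * Complex c0 t - of_int (int N - 2 * h)) *
             (of_real (real q / x)) powr (Complex c0 t)) * \<i>)
         has_integral
           (\<Sum>r = 1..q. \<Sum>n. chi r * of_real (
              real (Suc n) powr (of_int (int N - 2 * h)) *
              exp (- (real r / real q) * real (Suc n) ^ N * x) /
              (1 - exp (- (real (Suc n) ^ N * x)))))) UNIV"
proof -
  have c0: "c0 > 1" and "c0 * real N > real N - 2 * real_of_int h + 1"
    using assms(2,4) by (simp_all add: divide_less_eq)
  hence "real N * c0 - of_int (int N - 2 * h) > 1" by (simp add: algebra_simps)
  from has_bochner_integral_Gamma_dirichlet_L_zeta[OF assms(3) c0 assms(1) this]
  have "((\<lambda>t. Gamma (Complex c0 t) / (2 * pi) * dirichlet_L (Complex c0 t) chi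
      * riemann_zeta (of_nat N * Complex c0 t - of_int (int N - 2 * h))
      * of_real (real q / x) powr Complex c0 t) has_integral
      (\<Sum>r = 1..q. \<Sum>n. chi r * of_real (real (Suc n) powr (of_int (int N - 2 * h))
        * exp (- (real r / real q) * real (Suc n) ^ N * x) / (1 - exp (- (real (Suc n) ^ N * x))))))
      UNIV"
    by (rule has_integral_has_bochner_integral_lborel)
  moreover have "1 / (2 * pi * \<i>) * z * \<i> = z / (2 * pi)" for z :: complex
    by simp
  ultimately show ?thesis by (simp add: mult.assoc)
qed

end
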